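(* Let $\sigma^2>0$, $\boldsymbol\beta\in\mathbb{R}^p$ not identically zero, $\delta_1^2,\dots,\delta_p^2>0$, and $\Sigma=\sigma^2\boldsymbol\beta\boldsymbol\beta^\top+\mathrm{diag}(\delta_1^2,\dots,\delta_p^2)$. Let $w$ be the long-only minimum variance portfolio (the minimizer of $w^\top\Sigma w$ subject to $\sum_i w_i=1$, $w_i\ge0$), let $K=\{i:w_i>0\}$, and set $$B_K=\frac{1}{\sigma^2}+\sum_{j\in K}\frac{\beta_j^2}{\delta_j^2},\qquad C_K=\sum_{j\in K}\frac{\beta_j}{\delta_j^2}.$$ Then for every $i\in\{1,\dots,p\}$: $i\in K$ if and only if $B_K>\beta_i C_K$. *)

theory Defs
  imports "HOL-Analysis.Analysis"
begin

definition one_factor_cov :: "real \<Rightarrow> real^'n \<Rightarrow> real^'n \<Rightarrow> real^'n^'n" where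
  "one_factor_cov \<sigma> \<beta> \<delta> =
     (\<chi> i j. \<sigma>\<^sup>2 * (\<beta>$i * \<beta>$j) + (if i = j then (\<delta>$i)\<^sup>2 else 0))"

definition long_only :: "(real^'n::finite) set" where
  "long_only = {w. (\<Sum>i\<in>UNIV. w$i) = 1 \<and> (\<forall>i. 0 \<le> w$i)}"

definition is_lo_mvp :: "real^'n^'n \<Rightarrow> real^'n::finite \<Rightarrow> bool" where
  "is_lo_mvp S w \<longleftrightarrow> w \<in> long_only \<and>
     (\<forall>v\<in>long_only. w \<bullet> (S *v w) \<le> v \<bullet> (S *v v))"

end

theory Submission
  imports Defs
begin

(* Moving a little weight from an asset i held by the optimal portfolio w to any other asset j
   cannot lower the variance, so the marginal variances (Sigma w)_i all equal the optimal
   variance l = w' Sigma w on the support K and are at least l off it. In the one-factor model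
   (Sigma w)_i = sigma^2 beta_i s + delta_i^2 w_i with s = beta' w, hence i : K iff
   sigma^2 beta_i s < l. Solving for w_i on K and summing beta_i w_i gives sigma^2 s B_K = l C_K,
   so l (B_K - beta_i C_K) = B_K (l - sigma^2 beta_i s) with l, B_K > 0. *)

lemma inner_symmetric_matrix_vector:
  fixes S :: "real^'n^'n"
  assumes "transpose S = S"
  shows "x \<bullet> (S *v y) = y \<bullet> (S *v x)"
  by (metis assms dot_lmul_matrix inner_commute transpose_matrix_vector)

lemma long_only_shift_mem:
  fixes w :: "real^'n::finite"
  assumes "w \<in> long_only" "0 \<le> t" "t \<le> w$i"
  shows "w + t *\<^sub>R (axis j 1 - axis i 1) \<in> long_only"
proof -
  have "(\<Sum>k\<in>UNIV. (axis j 1 - axis i 1 :: real^'n) $ k) = 0"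
    by (simp add: sum_subtractf axis_def)
  moreover have "0 \<le> (w + t *\<^sub>R (axis j 1 - axis i 1)) $ k" for k
    using assms by (cases "k = i"; cases "k = j") (auto simp: long_only_def axis_def)
  ultimately show ?thesis
    using assms(1) by (simp add: long_only_def sum.distrib sum_distrib_left[symmetric])
qed

lemma lo_mvp_marginal_le:
  fixes S :: "real^'n^'n" and w :: "real^'n::finite"
  assumes sym: "transpose S = S" and mvp: "is_lo_mvp S w" and pos: "0 < w$i"
  shows "(S *v w)$i \<le> (S *v w)$j"
proof (rule ccontr)
  \<comment> \<open>Shifting weight t from i to j changes the variance by 2t((Sw)_j - (Sw)_i) + t^2 q,
    and t is chosen so small that this is negative.\<close>
  define g where "g = S *v w"
  assume "\<not> ?thesis"
  then have gap: "g$j < g$i" by (simp add: g_def)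
  define d :: "real^'n" where "d = axis j 1 - axis i 1"
  define q where "q = d \<bullet> (S *v d)"
  define t where "t = min (w$i) ((g$i - g$j) / (\<bar>q\<bar> + 1))"
  have t_pos: "0 < t" and t_le: "t \<le> w$i"
    using pos gap by (simp_all add: t_def)
  have "t * q \<le> t * (\<bar>q\<bar> + 1)" using t_pos by simp
  also have "\<dots> \<le> g$i - g$j"
    unfolding t_def using gap by (simp add: min_def pos_le_divide_eq[symmetric])
  finally have tq: "t * q \<le> g$i - g$j" .
  have d_g: "d \<bullet> g = g$j - g$i"
    by (simp add: d_def inner_diff_left inner_axis')
  have "(w + t *\<^sub>R d) \<bullet> (S *v (w + t *\<^sub>R d))
      = w \<bullet> (S *v w) + t * (d \<bullet> g) + t * (w \<bullet> (S *v d)) + t\<^sup>2 * q"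
    by (simp add: algebra_simps inner_add_left inner_add_right g_def q_def power2_eq_square)
  also have "\<dots> = w \<bullet> (S *v w) + 2 * t * (g$j - g$i) + t\<^sup>2 * q"
    using inner_symmetric_matrix_vector[OF sym, of w d] by (simp add: d_g flip: g_def)
  finally have expand: "(w + t *\<^sub>R d) \<bullet> (S *v (w + t *\<^sub>R d))
      = w \<bullet> (S *v w) + 2 * t * (g$j - g$i) + t\<^sup>2 * q" .
  have "w \<bullet> (S *v w) \<le> (w + t *\<^sub>R d) \<bullet> (S *v (w + t *\<^sub>R d))"
    using mvp long_only_shift_mem[OF _ less_imp_le[OF t_pos] t_le]
    by (simp add: is_lo_mvp_def d_def)
  then have "0 \<le> 2 * t * (g$j - g$i) + t * (t * q)"
    by (simp add: expand power2_eq_square)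
  also have "\<dots> \<le> t * (g$j - g$i)"
    using mult_left_mono[OF tq less_imp_le[OF t_pos]] by (simp add: algebra_simps)
  also have "\<dots> < 0" using t_pos gap by (simp add: mult_pos_neg)
  finally show False by simp
qed

lemma long_only_ex_pos:
  fixes w :: "real^'n::finite"
  assumes "w \<in> long_only"
  obtains i where "0 < w$i"
proof -
  have "\<exists>i. w$i \<noteq> 0"
    using assms unfolding long_only_def
    by (metis (mono_tags) mem_Collect_eq sum.neutral zero_neq_one)
  then show ?thesis
    using assms that by (force simp: long_only_def order_less_le)
qed

lemma lo_mvp_marginal_eq_value:
  fixes S :: "real^'n^'n" and w :: "real^'n::finite"
  assumes sym: "transpose S = S" and mvp: "is_lo_mvp S w"
  shows "0 < w$i \<Longrightarrow> (S *v w)$i = w \<bullet> (S *v w)"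
    and "w \<bullet> (S *v w) \<le> (S *v w)$j"
proof -
  have w: "w \<in> long_only" using mvp by (simp add: is_lo_mvp_def)
  then obtain i0 where i0: "0 < w$i0" by (rule long_only_ex_pos)
  define l where "l = (S *v w)$i0"
  have support: "(S *v w)$k = l" if "0 < w$k" for k
    using lo_mvp_marginal_le[OF sym mvp i0, of k] lo_mvp_marginal_le[OF sym mvp that, of i0]
    by (simp add: l_def)
  have weighted: "w$k * (S *v w)$k = l * w$k" for k
    using support[of k] w by (cases "w$k = 0") (auto simp: long_only_def order_less_le)
  have "w \<bullet> (S *v w) = l * (\<Sum>k\<in>UNIV. w$k)"
    by (simp add: inner_vec_def sum_distrib_left weighted)
  then have optimum: "w \<bullet> (S *v w) = l"
    using w by (simp add: long_only_def)
  show "0 < w$i \<Longrightarrow> (S *v w)$i = w \<bullet> (S *v w)"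
    using support optimum by simp
  show "w \<bullet> (S *v w) \<le> (S *v w)$j"
    using lo_mvp_marginal_le[OF sym mvp i0] optimum by (simp add: l_def)
qed

lemma one_factor_cov_transpose: "transpose (one_factor_cov \<sigma> \<beta> \<delta>) = one_factor_cov \<sigma> \<beta> \<delta>"
  by (simp add: one_factor_cov_def transpose_def mult.commute vec_eq_iff)

lemma one_factor_cov_mult_component:
  "(one_factor_cov \<sigma> \<beta> \<delta> *v v) $ i = \<sigma>\<^sup>2 * \<beta>$i * (\<beta> \<bullet> v) + (\<delta>$i)\<^sup>2 * v$i"
proof -
  have "(one_factor_cov \<sigma> \<beta> \<delta> *v v) $ i
      = (\<Sum>j\<in>UNIV. \<sigma>\<^sup>2 * \<beta>$i * (\<beta>$j * v$j) + (if j = i then (\<delta>$i)\<^sup>2 * v$i else 0))"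
    unfolding one_factor_cov_def matrix_vector_mult_def
    by (auto intro!: sum.cong simp: algebra_simps)
  then show ?thesis
    by (simp add: sum.distrib sum_distrib_left inner_vec_def)
qed

lemma one_factor_cov_quadratic:
  "v \<bullet> (one_factor_cov \<sigma> \<beta> \<delta> *v v) = \<sigma>\<^sup>2 * (\<beta> \<bullet> v)\<^sup>2 + (\<Sum>k\<in>UNIV. (\<delta>$k)\<^sup>2 * (v$k)\<^sup>2)"
  unfolding inner_vec_def [of v] one_factor_cov_mult_component
  by (simp add: sum.distrib sum_distrib_left sum_distrib_right power2_eq_square inner_vec_def
      algebra_simps)

lemma one_factor_cov_pos_definite:
  fixes v :: "real^'n::finite"
  assumes "\<forall>k. (\<delta>$k)\<^sup>2 > 0" and "v$i \<noteq> 0"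
  shows "0 < v \<bullet> (one_factor_cov \<sigma> \<beta> \<delta> *v v)"
proof -
  have "0 < (\<Sum>k\<in>UNIV. (\<delta>$k)\<^sup>2 * (v$k)\<^sup>2)"
    by (rule sum_pos2[of UNIV i]) (use assms in auto)
  then show ?thesis
    by (simp add: one_factor_cov_quadratic add_nonneg_pos)
qed

lemma one_factor_lo_mvp_support_iff:
  fixes w :: "real^'n::finite"
  assumes \<delta>: "\<forall>k. (\<delta>$k)\<^sup>2 > 0"
    and mvp: "is_lo_mvp (one_factor_cov \<sigma> \<beta> \<delta>) w"
  shows "0 < w$i \<longleftrightarrow> \<sigma>\<^sup>2 * \<beta>$i * (\<beta> \<bullet> w) < w \<bullet> (one_factor_cov \<sigma> \<beta> \<delta> *v w)"
proof (cases "0 < w$i")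
  case True
  have "0 < (\<delta>$i)\<^sup>2 * w$i"
    using True \<delta> by simp
  then show ?thesis
    using lo_mvp_marginal_eq_value(1)[OF one_factor_cov_transpose mvp True] True
    by (simp add: one_factor_cov_mult_component)
next
  case False
  then have "w$i = 0"
    using mvp by (simp add: is_lo_mvp_def long_only_def order_less_le)
  then show ?thesis
    using lo_mvp_marginal_eq_value(2)[OF one_factor_cov_transpose mvp, of i]
    by (simp add: one_factor_cov_mult_component)
qed

lemma one_factor_lo_mvp_budget:
  fixes w :: "real^'n::finite"
  assumes \<sigma>: "\<sigma>\<^sup>2 > 0" and \<delta>: "\<forall>k. (\<delta>$k)\<^sup>2 > 0"
    and mvp: "is_lo_mvp (one_factor_cov \<sigma> \<beta> \<delta>) w"
  defines "K \<equiv> {k. 0 < w$k}"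
  shows "\<sigma>\<^sup>2 * (\<beta> \<bullet> w) * (1 / \<sigma>\<^sup>2 + (\<Sum>j\<in>K. (\<beta>$j)\<^sup>2 / (\<delta>$j)\<^sup>2))
    = (w \<bullet> (one_factor_cov \<sigma> \<beta> \<delta> *v w)) * (\<Sum>j\<in>K. \<beta>$j / (\<delta>$j)\<^sup>2)"
proof -
  define s where "s = \<beta> \<bullet> w"
  define l where "l = w \<bullet> (one_factor_cov \<sigma> \<beta> \<delta> *v w)"
  have w_support: "w$k = (l - \<sigma>\<^sup>2 * \<beta>$k * s) / (\<delta>$k)\<^sup>2" if "k \<in> K" for k
    using lo_mvp_marginal_eq_value(1)[OF one_factor_cov_transpose mvp, of k] \<delta> that
    by (simp add: K_def l_def s_def one_factor_cov_mult_component field_simps)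
  have "s = (\<Sum>k\<in>K. \<beta>$k * w$k)"
    unfolding s_def inner_vec_def inner_real_def
    by (rule sum.mono_neutral_right)
      (use mvp in \<open>auto simp: K_def is_lo_mvp_def long_only_def order_less_le\<close>)
  also have "\<dots> = l * (\<Sum>k\<in>K. \<beta>$k / (\<delta>$k)\<^sup>2) - \<sigma>\<^sup>2 * s * (\<Sum>k\<in>K. (\<beta>$k)\<^sup>2 / (\<delta>$k)\<^sup>2)"
    by (simp add: w_support sum_distrib_left sum_subtractf diff_divide_distrib
        right_diff_distrib power2_eq_square mult_ac)
  finally show ?thesis
    using \<sigma> by (simp add: s_def l_def distrib_left)
qed

theorem lemma1:
  fixes \<sigma> :: real and \<beta> \<delta> w :: "real^'n::finite"
  assumes "\<sigma>\<^sup>2 > 0"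
    and "\<beta> \<noteq> 0"
    and "\<forall>i. (\<delta>$i)\<^sup>2 > 0"
    and "is_lo_mvp (one_factor_cov \<sigma> \<beta> \<delta>) w"
  shows "\<forall>i. (0 < w$i) \<longleftrightarrow>
     (1 / \<sigma>\<^sup>2 + (\<Sum>j\<in>{k. 0 < w$k}. (\<beta>$j)\<^sup>2 / (\<delta>$j)\<^sup>2))
       > \<beta>$i * (\<Sum>j\<in>{k. 0 < w$k}. \<beta>$j / (\<delta>$j)\<^sup>2)"
proof
  fix i
  note \<sigma> = assms(1) and \<delta> = assms(3) and mvp = assms(4)
  define s where "s = \<beta> \<bullet> w"
  define l where "l = w \<bullet> (one_factor_cov \<sigma> \<beta> \<delta> *v w)"
  define B where "B = 1 / \<sigma>\<^sup>2 + (\<Sum>j\<in>{k. 0 < w$k}. (\<beta>$j)\<^sup>2 / (\<delta>$j)\<^sup>2)"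
  define C where "C = (\<Sum>j\<in>{k. 0 < w$k}. \<beta>$j / (\<delta>$j)\<^sup>2)"
  obtain i0 where "0 < w$i0"
    using mvp long_only_ex_pos by (auto simp: is_lo_mvp_def)
  then have l_pos: "0 < l"
    using one_factor_cov_pos_definite[OF \<delta>, of w i0] by (simp add: l_def)
  have B_pos: "0 < B"
    using \<sigma> by (simp add: B_def add_pos_nonneg sum_nonneg)
  have "\<sigma>\<^sup>2 * s * B = l * C"
    using one_factor_lo_mvp_budget[OF \<sigma> \<delta> mvp] by (simp add: B_def C_def s_def l_def)
  then have "l * (B - \<beta>$i * C) = B * (l - \<sigma>\<^sup>2 * \<beta>$i * s)"
    by (metis (no_types) mult.commute mult.left_commute right_diff_distrib)
  then have "\<beta>$i * C < B \<longleftrightarrow> \<sigma>\<^sup>2 * \<beta>$i * s < l"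
    using l_pos B_pos by (metis diff_gt_0_iff_gt zero_less_mult_iff zero_less_mult_pos)
  then show "0 < w$i \<longleftrightarrow> B > \<beta>$i * C"
    using one_factor_lo_mvp_support_iff[OF \<delta> mvp] by (simp add: s_def l_def)
qed

end
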